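(* Let $q$ be a prime power, $\mathbb{L}=\mathrm{GF}(q^m)$, $n\mid q^m-1$, and $F_n=\{f\in\mathbb{L}^n : f_{qi\bmod n}=f_i^q\ \forall i\in\mathbb{Z}/n\mathbb{Z}\}$. Let $B_m(n)$ be the number of $q$-cyclotomic classes modulo $n$ having length $m$. Then the covering radius of $F_n\subseteq\mathbb{L}^n$ in the symbol Hamming metric is $$\rho(F_n)=n-B_m(n).$$ For $n=q^m-1$, $B_m(n)=\frac1m\sum_{r\mid m}\mu(m/r)(q^r-1)$.
   Context: The symbol Hamming distance between $x,y\in\mathbb{L}^n$ is $|\{i : x_i\ne y_i\}|$; the covering radius of a code $\mathcal{C}\subseteq\mathbb{L}^n$ is $\max_{x\in\mathbb{L}^n}\min_{c\in\mathcal{C}}d(x,c)$. The $q$-cyclotomic class of $s\in\mathbb{Z}/n\mathbb{Z}$ is $\{s,qs,q^2s,\ldots\}\bmod n$. $\mu$ is the Möbius function. *)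

theory Defs
  imports "HOL-Computational_Algebra.Computational_Algebra"
begin

text \<open>Words of length n over an alphabet 'a, indexed by {0..<n} (i.e. Z/nZ).\<close>
definition words :: "nat \<Rightarrow> (nat \<Rightarrow> 'a) set" where
  "words n = PiE {..<n} (\<lambda>_. UNIV)"

definition hamming_dist :: "nat \<Rightarrow> (nat \<Rightarrow> 'a) \<Rightarrow> (nat \<Rightarrow> 'a) \<Rightarrow> nat" where
  "hamming_dist n x y = card {i. i < n \<and> x i \<noteq> y i}"

definition covering_radius :: "nat \<Rightarrow> (nat \<Rightarrow> 'a) set \<Rightarrow> nat" where
  "covering_radius n C = Max ((\<lambda>x. Min ((\<lambda>c. hamming_dist n x c) ` C)) ` words n)"

definition F_code :: "nat \<Rightarrow> nat \<Rightarrow> (nat \<Rightarrow> 'a::field) set" where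
  "F_code q n = {f \<in> words n. \<forall>i<n. f ((q * i) mod n) = (f i) ^ q}"

definition cyclotomic_class :: "nat \<Rightarrow> nat \<Rightarrow> nat \<Rightarrow> nat set" where
  "cyclotomic_class q n s = {(q ^ j * s) mod n | j. True}"

definition B_count :: "nat \<Rightarrow> nat \<Rightarrow> nat \<Rightarrow> nat" where
  "B_count q m n = card {C \<in> cyclotomic_class q n ` {..<n}. card C = m}"

definition moebius_mu :: "nat \<Rightarrow> int" where
  "moebius_mu k = (if k = 0 then 0 else if squarefree k then (-1) ^ card (prime_factors k) else 0)"

end

theory Submission
  imports Defs
begin

(* A word f of F_n is determined by its values at one representative s of every q-cyclotomic
   class C, where f_s may be any element with f_s^(q^|C|) = f_s.  On a class of full length m this
   value is unconstrained, so every word x agrees with some codeword at one position of each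
   full-length class: its distance to F_n is at most n - B_m(n).  Conversely, take the constant
   word z with z in no proper subfield of L.  A codeword taking the value z at position i forces
   the class of i to have length m, and it takes the value z at no other position of that class,
   so the constant word has distance at least n - B_m(n) from F_n.
   For n = q^m - 1 the positions whose class length divides d are the multiples of
   (q^m - 1)/(q^d - 1), so there are q^d - 1 of them; Moebius inversion then counts the
   m B_m(n) positions whose class has full length m. *)

section \<open>Orbits of multiplication by q modulo n\<close>

definition cyclotomic_period :: "nat \<Rightarrow> nat \<Rightarrow> nat \<Rightarrow> nat" where
  "cyclotomic_period q n i = (LEAST d. 0 < d \<and> q ^ d * i mod n = i)"

lemma power_mult_mod_mod:
  "q ^ a * (q ^ b * i mod n) mod n = q ^ (a + b) * i mod (n::nat)"
  by (simp add: mod_mult_right_eq power_add mult.assoc)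

lemma power_mult_mod_period_mult:
  assumes "q ^ p * i mod n = (i::nat)"
  shows "q ^ (p * t) * i mod n = i"
proof (induction t)
  case 0
  show ?case using assms by (metis mod_mod_trivial mult_1 power_0 mult_0_right)
next
  case (Suc t)
  have "q ^ (p * Suc t) * i mod n = q ^ p * (q ^ (p * t) * i mod n) mod n"
    by (simp add: power_mult_mod_mod)
  also have "\<dots> = i" using Suc assms by simp
  finally show ?case .
qed

lemma power_mult_mod_period_mod:
  assumes "q ^ p * i mod n = (i::nat)"
  shows "q ^ a * i mod n = q ^ (a mod p) * i mod n"
proof -
  have "q ^ a * i mod n = q ^ (a mod p) * (q ^ (p * (a div p)) * i mod n) mod n"
    by (simp add: power_mult_mod_mod)
  also have "\<dots> = q ^ (a mod p) * i mod n"
    using power_mult_mod_period_mult[OF assms] by simp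
  finally show ?thesis .
qed

locale cyclotomic_orbits =
  fixes q m n :: nat
  assumes q_pow_m: "q ^ m mod n = 1 mod n" and n_pos: "n > 0" and m_pos: "m > 0"
begin

abbreviation per :: "nat \<Rightarrow> nat" where
  "per \<equiv> cyclotomic_period q n"

abbreviation cls :: "nat \<Rightarrow> nat set" where
  "cls \<equiv> cyclotomic_class q n"

lemma power_m_mult_mod: "i < n \<Longrightarrow> q ^ m * i mod n = i"
  using q_pow_m by (metis mod_mult_left_eq mult_1 mod_less)

lemma cyclotomic_period_pos_fixes:
  assumes "i < n"
  shows "0 < per i" "q ^ per i * i mod n = i"
proof -
  have "0 < m \<and> q ^ m * i mod n = i" using m_pos power_m_mult_mod[OF assms] by simp
  then have "0 < per i \<and> q ^ per i * i mod n = i"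
    unfolding cyclotomic_period_def by (rule LeastI)
  then show "0 < per i" "q ^ per i * i mod n = i" by auto
qed

lemma power_mult_mod_eq_self_iff:
  assumes "i < n"
  shows "q ^ d * i mod n = i \<longleftrightarrow> per i dvd d"
proof
  assume fix_d: "q ^ d * i mod n = i"
  have "q ^ (d mod per i) * i mod n = i"
    using fix_d power_mult_mod_period_mod[OF cyclotomic_period_pos_fixes(2)[OF assms], of d] by simp
  then have "\<not> (0 < d mod per i)"
    using not_less_Least[of "d mod per i" "\<lambda>d. 0 < d \<and> q ^ d * i mod n = i"]
      cyclotomic_period_pos_fixes(1)[OF assms]
    unfolding cyclotomic_period_def by auto
  then show "per i dvd d" by auto
next
  assume "per i dvd d"
  then show "q ^ d * i mod n = i"
    using power_mult_mod_period_mult[OF cyclotomic_period_pos_fixes(2)[OF assms]] by auto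
qed

lemma cyclotomic_period_dvd_m: "i < n \<Longrightarrow> per i dvd m"
  using power_mult_mod_eq_self_iff power_m_mult_mod by blast

lemma power_mult_mod_eq_iff:
  assumes "i < n"
  shows "q ^ a * i mod n = q ^ b * i mod n \<longleftrightarrow> a mod per i = b mod per i"
proof -
  note period = cyclotomic_period_pos_fixes[OF assms]
  have shift: "per i dvd b - a" if "a \<le> b" "q ^ a * i mod n = q ^ b * i mod n" for a b
  proof -
    \<comment> \<open>multiplying by \<open>q ^ ((per i - 1) * a)\<close> moves \<open>q ^ a * i\<close> back to \<open>i\<close>\<close>
    let ?k = "(per i - 1) * a"
    have per_a: "?k + a = per i * a" and per_b: "?k + b = (b - a) + per i * a"
      using period(1) that(1) by (auto simp: algebra_simps)
    have "q ^ ?k * (q ^ a * i mod n) mod n = q ^ (per i * a) * i mod n"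
      by (simp only: power_mult_mod_mod per_a)
    then have "i = q ^ ?k * (q ^ a * i mod n) mod n"
      using power_mult_mod_period_mult[OF period(2)] by simp
    also have "\<dots> = q ^ (b - a) * (q ^ (per i * a) * i mod n) mod n"
      unfolding that(2) by (simp only: power_mult_mod_mod per_b)
    also have "\<dots> = q ^ (b - a) * i mod n"
      using power_mult_mod_period_mult[OF period(2)] by simp
    finally have "q ^ (b - a) * i mod n = i" by (rule sym)
    then show ?thesis using power_mult_mod_eq_self_iff[OF assms] by blast
  qed
  show ?thesis
  proof
    assume "a mod per i = b mod per i"
    then show "q ^ a * i mod n = q ^ b * i mod n"
      using power_mult_mod_period_mod[OF period(2)] by metis
  next
    assume eq: "q ^ a * i mod n = q ^ b * i mod n"
    show "a mod per i = b mod per i"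
    proof (cases "a \<le> b")
      case True
      then show ?thesis using shift[OF True eq] by (metis mod_eq_dvd_iff_nat)
    next
      case False
      then show ?thesis using shift[of b a] eq by (metis mod_eq_dvd_iff_nat nat_le_linear)
    qed
  qed
qed

lemma cyclotomic_class_eq_image:
  assumes "i < n"
  shows "cls i = (\<lambda>j. q ^ j * i mod n) ` {..<per i}"
proof
  show "cls i \<subseteq> (\<lambda>j. q ^ j * i mod n) ` {..<per i}"
  proof
    fix x assume "x \<in> cls i"
    then obtain j where "x = q ^ j * i mod n" unfolding cyclotomic_class_def by auto
    then have "x = q ^ (j mod per i) * i mod n"
      using power_mult_mod_period_mod[OF cyclotomic_period_pos_fixes(2)[OF assms]] by simp
    then show "x \<in> (\<lambda>j. q ^ j * i mod n) ` {..<per i}"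
      using cyclotomic_period_pos_fixes(1)[OF assms] by auto
  qed
qed (auto simp: cyclotomic_class_def)

lemma card_cyclotomic_class: "i < n \<Longrightarrow> card (cls i) = per i"
  by (simp add: cyclotomic_class_eq_image card_image inj_on_def power_mult_mod_eq_iff)

lemma finite_cyclotomic_class: "i < n \<Longrightarrow> finite (cls i)"
  by (simp add: cyclotomic_class_eq_image)

lemma cyclotomic_class_self: "i < n \<Longrightarrow> i \<in> cls i"
  unfolding cyclotomic_class_def by (rule CollectI, rule exI[of _ 0]) simp

lemma mult_mod_in_cyclotomic_class: "q * i mod n \<in> cls i"
  unfolding cyclotomic_class_def by (rule CollectI, rule exI[of _ 1]) simp

lemma cyclotomic_class_less: "x \<in> cls i \<Longrightarrow> x < n"
  unfolding cyclotomic_class_def using n_pos by auto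

lemma cyclotomic_class_eq_of_mem:
  assumes i: "i < n" and s: "s \<in> cls i"
  shows "cls s = cls i"
proof -
  obtain a where s_eq: "s = q ^ a * i mod n" using s unfolding cyclotomic_class_def by auto
  have shift: "q ^ j * s mod n = q ^ (j + a) * i mod n" for j
    unfolding s_eq by (simp only: power_mult_mod_mod)
  \<comment> \<open>\<open>q ^ m\<close> acts trivially, so \<open>q ^ ((m - 1) * a)\<close> inverts \<open>q ^ a\<close>\<close>
  have inverse: "q ^ (j + (m - 1) * a) * s mod n = q ^ j * i mod n" for j
  proof -
    have "j + (m - 1) * a + a = j + m * a" using m_pos by (cases m) auto
    then have "q ^ (j + (m - 1) * a) * s mod n = q ^ j * (q ^ (m * a) * i mod n) mod n"
      by (simp only: shift power_mult_mod_mod)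
    then show ?thesis using power_mult_mod_period_mult[OF power_m_mult_mod[OF i]] by simp
  qed
  then have "cls i \<subseteq> cls s"
    unfolding cyclotomic_class_def by (auto simp flip: inverse)
  moreover have "cls s \<subseteq> cls i"
    unfolding cyclotomic_class_def shift by blast
  ultimately show ?thesis by blast
qed

lemma cyclotomic_period_eq_of_mem: "i < n \<Longrightarrow> s \<in> cls i \<Longrightarrow> per s = per i"
  by (metis card_cyclotomic_class cyclotomic_class_eq_of_mem cyclotomic_class_less)

lemma card_full_period_positions: "card {i. i < n \<and> per i = m} = m * B_count q m n"
proof -
  let ?R = "{C \<in> cls ` {..<n}. card C = m}"
  have union: "\<Union>?R = {i. i < n \<and> per i = m}"
  proof (intro equalityI subsetI)
    fix x assume "x \<in> \<Union>?R"
    then obtain i where "i < n" "x \<in> cls i" "per i = m" by (auto simp: card_cyclotomic_class)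
    then show "x \<in> {i. i < n \<and> per i = m}"
      using cyclotomic_class_less cyclotomic_period_eq_of_mem by auto
  next
    fix x assume "x \<in> {i. i < n \<and> per i = m}"
    then show "x \<in> \<Union>?R" using cyclotomic_class_self card_cyclotomic_class by auto
  qed
  have disjoint: "C \<inter> C' = {}" if C: "C \<in> ?R" and C': "C' \<in> ?R" and "C \<noteq> C'" for C C'
  proof -
    obtain i i' where "i < n" "C = cls i" "i' < n" "C' = cls i'" using C C' by blast
    then show ?thesis using \<open>C \<noteq> C'\<close> cyclotomic_class_eq_of_mem by blast
  qed
  have "m * card ?R = card (\<Union>?R)"
    by (rule card_partition) (use disjoint in \<open>auto simp: union\<close>)
  then show ?thesis unfolding union B_count_def by simp
qed

lemma card_period_dvd:
  assumes n: "n = q ^ m - 1" and "d dvd m"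
  shows "card {i. i < n \<and> per i dvd d} = q ^ d - 1"
proof -
  obtain k where mk: "m = d * k" using \<open>d dvd m\<close> by (elim dvdE)
  have "q > 0" using n n_pos by (cases q) (auto simp: zero_power m_pos)
  have "int (q ^ d) - 1 dvd int (q ^ d) ^ k - 1"
    using power_diff_1_eq[of "int (q ^ d)" k] by simp
  then have "q ^ d - 1 dvd n"
    unfolding n mk using \<open>q > 0\<close>
    by (simp add: power_mult Suc_le_eq flip: of_nat_power int_dvd_int_iff)
  then obtain t where nt: "n = (q ^ d - 1) * t" by (elim dvdE)
  have "q ^ d - 1 > 0" "t > 0" using nt n_pos by auto
  have period_dvd_iff: "per i dvd d \<longleftrightarrow> t dvd i" if "i < n" for i
  proof -
    have "per i dvd d \<longleftrightarrow> q ^ d * i mod n = i mod n"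
      using power_mult_mod_eq_self_iff[OF that] that by simp
    also have "\<dots> \<longleftrightarrow> n dvd (q ^ d - 1) * i"
      using \<open>q ^ d - 1 > 0\<close> by (subst mod_eq_dvd_iff_nat) (auto simp: diff_mult_distrib)
    also have "\<dots> \<longleftrightarrow> t dvd i" using nt \<open>q ^ d - 1 > 0\<close> by simp
    finally show ?thesis .
  qed
  have "{i. i < n \<and> per i dvd d} = (\<lambda>j. t * j) ` {..<q ^ d - 1}"
  proof (intro equalityI subsetI)
    fix i assume i: "i \<in> {i. i < n \<and> per i dvd d}"
    then have "t dvd i" using period_dvd_iff by blast
    then obtain j where "i = t * j" by (elim dvdE)
    moreover from this have "j < q ^ d - 1" using i nt by (simp add: mult.commute)
    ultimately show "i \<in> (\<lambda>j. t * j) ` {..<q ^ d - 1}" by auto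
  next
    fix i assume "i \<in> (\<lambda>j. t * j) ` {..<q ^ d - 1}"
    then obtain j where "i = t * j" "j < q ^ d - 1" by auto
    moreover from this have "i < n" using nt \<open>t > 0\<close> by (simp add: mult.commute)
    ultimately show "i \<in> {i. i < n \<and> per i dvd d}" using period_dvd_iff by auto
  qed
  moreover have "inj_on (\<lambda>j. t * j) {..<q ^ d - 1}" using \<open>t > 0\<close> by (simp add: inj_on_def)
  ultimately show ?thesis by (simp add: card_image)
qed

lemma sum_card_period_divisors:
  assumes "n = q ^ m - 1" and "d dvd m"
  shows "(\<Sum>e | e dvd d. card {i. i < n \<and> per i = e}) = q ^ d - 1"
proof -
  have "d > 0" using assms(2) m_pos by (auto intro: dvd_pos_nat)
  have "{i. i < n \<and> per i dvd d} = (\<Union>e\<in>{e. e dvd d}. {i. i < n \<and> per i = e})" by auto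
  then have "card {i. i < n \<and> per i dvd d} = (\<Sum>e | e dvd d. card {i. i < n \<and> per i = e})"
    using \<open>d > 0\<close> by (simp only:) (rule card_UN_disjoint, auto)
  then show ?thesis using card_period_dvd[OF assms] by simp
qed

end

section \<open>Frobenius powers in a finite field\<close>

(* The library's finite_field_power_card_eq_same is stated for the type class finite_field,
   and {field, finite} is not registered as a subclass of it. *)
lemma power_card_eq_self:
  fixes x :: "'a::{field,finite}"
  shows "x ^ card (UNIV :: 'a set) = x"
proof (cases "x = 0")
  case True
  then show ?thesis using finite_UNIV_card_ge_0[where ?'a = 'a] by simp
next
  case False
  let ?U = "UNIV - {0} :: 'a set"
  have "bij_betw ((*) x) ?U ?U"
    by (rule bij_betwI[of _ _ _ "\<lambda>y. y / x"]) (use False in auto)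
  then have "(\<Prod>y\<in>?U. x * y) = \<Prod>?U"
    by (rule prod.reindex_bij_betw)
  then have "x ^ card ?U * \<Prod>?U = \<Prod>?U"
    by (simp add: prod.distrib)
  moreover have "\<Prod>?U \<noteq> 0" by simp
  ultimately have "x ^ card ?U = 1" by simp
  moreover have "card (UNIV :: 'a set) = Suc (card ?U)"
    using finite_UNIV_card_ge_0[where ?'a = 'a] by (simp add: card_Diff_singleton)
  ultimately show ?thesis by (simp only: power_Suc mult_1_right)
qed

lemma power_q_power_mod:
  fixes x :: "'a::{field,finite}"
  assumes "card (UNIV :: 'a set) = q ^ m"
  shows "x ^ (q ^ a) = x ^ (q ^ (a mod m))"
proof -
  have frobenius_m: "y ^ (q ^ m) = y" for y :: 'a
    using power_card_eq_self[of y] assms by simp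
  have "x ^ (q ^ (m * t)) = x" for t
    by (induction t) (simp_all add: power_add power_mult frobenius_m)
  moreover have "q ^ a = q ^ (m * (a div m)) * q ^ (a mod m)"
    by (simp flip: power_add)
  then have "x ^ (q ^ a) = (x ^ (q ^ (m * (a div m)))) ^ (q ^ (a mod m))"
    by (simp add: power_mult)
  ultimately show ?thesis by simp
qed

lemma card_power_eq_self_le:
  assumes "N \<ge> 2"
  shows "card {z :: 'a::idom. z ^ N = z} \<le> N"
proof -
  define P :: "'a poly" where "P = monom 1 N - monom 1 1"
  have "coeff P N = 1" using assms by (simp add: P_def coeff_monom)
  then have "P \<noteq> 0" by auto
  moreover have "degree P \<le> N"
    unfolding P_def using assms
    by (intro order.trans[OF degree_diff_le_max]) (auto simp: degree_monom_eq)
  moreover have "{z. z ^ N = z} = {z. poly P z = 0}" by (simp add: P_def poly_monom)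
  ultimately show ?thesis using card_poly_roots_bound[of P] by simp
qed

lemma sum_power_less_power:
  fixes q :: nat
  assumes "q \<ge> 2"
  shows "(\<Sum>e<m. q ^ e) < q ^ m"
proof (induction m)
  case (Suc m)
  then have "(\<Sum>e<Suc m. q ^ e) < q ^ m + q ^ m" by simp
  also have "\<dots> \<le> q * q ^ m" using assms by (simp add: mult_2[symmetric])
  finally show ?case by simp
qed simp

lemma exists_not_in_proper_subfield:
  assumes card: "card (UNIV :: 'a::{field,finite} set) = q ^ m" and q: "q \<ge> 2"
  shows "\<exists>z::'a. \<forall>e. 0 < e \<and> e < m \<longrightarrow> z ^ (q ^ e) \<noteq> z"
proof -
  let ?Fix = "\<lambda>e. {z::'a. z ^ (q ^ e) = z}"
  have "q ^ e \<ge> 2" if "0 < e" for e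
    using one_less_power[of q e] that q by simp
  then have "card (\<Union>e\<in>{1..<m}. ?Fix e) \<le> (\<Sum>e\<in>{1..<m}. q ^ e)"
    by (intro order.trans[OF card_UN_le] sum_mono card_power_eq_self_le) auto
  also have "\<dots> \<le> (\<Sum>e<m. q ^ e)" by (rule sum_mono2) auto
  also have "\<dots> < card (UNIV :: 'a set)" using sum_power_less_power[OF q] card by simp
  finally have "(\<Union>e\<in>{1..<m}. ?Fix e) \<noteq> UNIV" by auto
  then obtain z where "z \<notin> (\<Union>e\<in>{1..<m}. ?Fix e)" by auto
  then show ?thesis by (intro exI[of _ z]) auto
qed

lemma not_in_proper_subfield_power_fixed_dvd:
  fixes z :: "'a::{field,finite}"
  assumes card: "card (UNIV :: 'a set) = q ^ m" and "m > 0"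
    and z: "\<forall>e. 0 < e \<and> e < m \<longrightarrow> z ^ (q ^ e) \<noteq> z" and fixed: "z ^ (q ^ a) = z"
  shows "m dvd a"
proof -
  have "z ^ (q ^ (a mod m)) = z" using fixed power_q_power_mod[OF card, of z a] by simp
  then have "a mod m = 0" using z \<open>m > 0\<close> by (meson mod_less_divisor neq0_conv)
  then show ?thesis by auto
qed

section \<open>Covering radius of F_n\<close>

lemma F_code_power_iterate:
  assumes f: "f \<in> F_code q n" and i: "i < n"
  shows "f (q ^ a * i mod n) = f i ^ (q ^ a)"
proof (induction a)
  case 0
  show ?case using i by simp
next
  case (Suc a)
  have "f (q ^ Suc a * i mod n) = f (q * (q ^ a * i mod n) mod n)"
    by (simp add: mod_mult_right_eq mult.assoc)
  also have "\<dots> = f (q ^ a * i mod n) ^ q"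
    using f i unfolding F_code_def by auto
  also have "\<dots> = f i ^ (q ^ Suc a)" using Suc by (simp add: power_mult[symmetric] mult.commute)
  finally show ?case .
qed

lemma hamming_dist_eq_diff_agree:
  "hamming_dist n x y = n - card {i. i < n \<and> x i = y i}"
proof -
  have "{i. i < n \<and> x i \<noteq> y i} = {..<n} - {i. i < n \<and> x i = y i}" by auto
  moreover have "card ({..<n} - {i. i < n \<and> x i = y i}) = n - card {i. i < n \<and> x i = y i}"
    by (subst card_Diff_subset) auto
  ultimately show ?thesis unfolding hamming_dist_def by simp
qed

lemma covering_radius_eqI:
  fixes C :: "(nat \<Rightarrow> 'a::finite) set"
  assumes "C \<subseteq> words n"
    and covered: "\<And>x. x \<in> words n \<Longrightarrow> \<exists>c\<in>C. hamming_dist n x c \<le> r"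
    and deep: "\<And>c. c \<in> C \<Longrightarrow> r \<le> hamming_dist n x0 c"
  shows "covering_radius n C = r"
proof -
  define D where "D x = Min ((\<lambda>c. hamming_dist n x c) ` C)" for x
  have "finite (words n :: (nat \<Rightarrow> 'a) set)" unfolding words_def by (simp add: finite_PiE)
  then have "finite C" using \<open>C \<subseteq> words n\<close> by (rule finite_subset[rotated])
  have "D x \<le> r" if x: "x \<in> words n" for x
  proof -
    obtain c where "c \<in> C" "hamming_dist n x c \<le> r" using covered[OF x] by blast
    then show ?thesis unfolding D_def using \<open>finite C\<close> by (intro Min_le_iff[THEN iffD2]) auto
  qed
  moreover
  let ?x0 = "restrict x0 {..<n}"
  have "?x0 \<in> words n" by (simp add: words_def)
  moreover have "hamming_dist n ?x0 c = hamming_dist n x0 c" for c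
    unfolding hamming_dist_def by (rule arg_cong[where f = card]) auto
  then have "r \<le> D ?x0"
    using covered[OF \<open>?x0 \<in> words n\<close>] deep \<open>finite C\<close> unfolding D_def by (subst Min_ge_iff) auto
  ultimately have "Max (D ` words n) = r"
    using \<open>finite (words n)\<close> by (intro antisym; subst Max_le_iff Max_ge_iff) auto
  then show ?thesis unfolding covering_radius_def D_def .
qed

context cyclotomic_orbits
begin

lemma hamming_dist_const_F_code_ge:
  fixes z :: "'a::{field,finite}"
  assumes card: "card (UNIV :: 'a set) = q ^ m"
    and z: "\<forall>e. 0 < e \<and> e < m \<longrightarrow> z ^ (q ^ e) \<noteq> z"
    and f: "f \<in> F_code q n"
  shows "n - B_count q m n \<le> hamming_dist n (\<lambda>_. z) f"
proof -
  define M where "M = {i. i < n \<and> z = f i}"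
  have M_dvd: "m dvd a" if "i \<in> M" "q ^ a * i mod n \<in> M" for i a
  proof -
    have "z ^ (q ^ a) = z"
      using that F_code_power_iterate[OF f, of i a] unfolding M_def by simp
    then show ?thesis by (rule not_in_proper_subfield_power_fixed_dvd[OF card m_pos z])
  qed
  have M_full: "per i = m" if i: "i \<in> M" for i
  proof -
    have "i < n" using i unfolding M_def by simp
    then have "per i dvd m" "q ^ per i * i mod n = i"
      using cyclotomic_period_dvd_m cyclotomic_period_pos_fixes(2) by auto
    then show ?thesis using M_dvd[OF i, of "per i"] i by (simp add: dvd_antisym)
  qed
  have "inj_on cls M"
  proof
    fix i i' assume i: "i \<in> M" and i': "i' \<in> M" and same: "cls i = cls i'"
    have "i < n" "i' < n" using i i' unfolding M_def by auto
    then have "i' \<in> cls i" using same cyclotomic_class_self by simp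
    then obtain a where a: "i' = q ^ a * i mod n" unfolding cyclotomic_class_def by auto
    then have "m dvd a" using M_dvd i i' by simp
    then show "i = i'"
      using a power_mult_mod_period_mult[OF power_m_mult_mod[OF \<open>i < n\<close>]] by auto
  qed
  moreover have "cls ` M \<subseteq> {C \<in> cls ` {..<n}. card C = m}"
    using M_full card_cyclotomic_class unfolding M_def by auto
  ultimately have "card M \<le> B_count q m n"
    unfolding B_count_def by (intro card_inj_on_le) auto
  then show ?thesis unfolding hamming_dist_eq_diff_agree M_def by simp
qed

definition class_rep :: "nat \<Rightarrow> nat" where
  "class_rep i = Min (cls i)"

definition class_exponent :: "nat \<Rightarrow> nat" where
  "class_exponent i = (LEAST j. q ^ j * class_rep i mod n = i)"

definition F_extension :: "(nat \<Rightarrow> 'a::field) \<Rightarrow> nat \<Rightarrow> 'a" where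
  "F_extension x i =
     (if i < n then if per i = m then x (class_rep i) ^ (q ^ class_exponent i) else 0 else undefined)"

lemma class_rep_in_class:
  assumes "i < n"
  shows "class_rep i \<in> cls i" "cls (class_rep i) = cls i"
proof -
  show rep: "class_rep i \<in> cls i"
    unfolding class_rep_def using assms finite_cyclotomic_class cyclotomic_class_self
    by (intro Min_in) auto
  show "cls (class_rep i) = cls i" by (rule cyclotomic_class_eq_of_mem[OF assms rep])
qed

lemma class_rep_of_mem: "i < n \<Longrightarrow> s \<in> cls i \<Longrightarrow> class_rep s = class_rep i"
  unfolding class_rep_def by (simp add: cyclotomic_class_eq_of_mem)

lemma power_class_exponent_rep:
  assumes "i < n"
  shows "q ^ class_exponent i * class_rep i mod n = i"
proof -
  have "i \<in> cls (class_rep i)" using class_rep_in_class(2)[OF assms] cyclotomic_class_self[OF assms] by simp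
  then obtain j where "i = q ^ j * class_rep i mod n" unfolding cyclotomic_class_def by auto
  then show ?thesis
    using LeastI[of "\<lambda>j. q ^ j * class_rep i mod n = i" j] unfolding class_exponent_def by simp
qed

lemma class_exponent_step:
  assumes i: "i < n"
  shows "class_exponent (q * i mod n) mod per i = Suc (class_exponent i) mod per i"
proof -
  let ?s = "class_rep i" and ?i' = "q * i mod n"
  have i'_mem: "?i' \<in> cls i" by (rule mult_mod_in_cyclotomic_class)
  have s: "?s < n" "per ?s = per i"
    using class_rep_in_class(1)[OF i] cyclotomic_class_less cyclotomic_period_eq_of_mem[OF i] by auto
  have "q ^ class_exponent ?i' * ?s mod n = ?i'"
    using power_class_exponent_rep[of ?i'] class_rep_of_mem[OF i i'_mem] n_pos by simp
  also have "\<dots> = q ^ 1 * (q ^ class_exponent i * ?s mod n) mod n"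
    using power_class_exponent_rep[OF i] by simp
  also have "\<dots> = q ^ Suc (class_exponent i) * ?s mod n"
    by (simp only: power_mult_mod_mod) simp
  finally show ?thesis unfolding power_mult_mod_eq_iff[OF s(1)] s(2) .
qed

lemma F_extension_in_F_code:
  fixes x :: "nat \<Rightarrow> 'a::{field,finite}"
  assumes card: "card (UNIV :: 'a set) = q ^ m" and "q > 0"
  shows "F_extension x \<in> F_code q n"
  unfolding F_code_def words_def
proof (intro CollectI conjI allI impI)
  show "F_extension x \<in> {..<n} \<rightarrow>\<^sub>E UNIV"
    unfolding F_extension_def by (auto simp: PiE_iff extensional_def)
  fix i assume i: "i < n"
  let ?i' = "q * i mod n"
  have i'_mem: "?i' \<in> cls i" by (rule mult_mod_in_cyclotomic_class)
  have i': "?i' < n" "per ?i' = per i" "class_rep ?i' = class_rep i"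
    using n_pos cyclotomic_period_eq_of_mem[OF i i'_mem] class_rep_of_mem[OF i i'_mem] by auto
  show "F_extension x ?i' = F_extension x i ^ q"
  proof (cases "per i = m")
    case True
    let ?y = "x (class_rep i)"
    have "F_extension x ?i' = ?y ^ (q ^ class_exponent ?i')"
      unfolding F_extension_def using i' True by simp
    also have "\<dots> = ?y ^ (q ^ (class_exponent ?i' mod m))" by (rule power_q_power_mod[OF card])
    also have "\<dots> = ?y ^ (q ^ (Suc (class_exponent i) mod m))"
      using class_exponent_step[OF i] True by simp
    also have "\<dots> = ?y ^ (q ^ Suc (class_exponent i))" by (rule power_q_power_mod[OF card, symmetric])
    also have "\<dots> = F_extension x i ^ q"
      unfolding F_extension_def using i True by (simp add: power_mult[symmetric] mult.commute)
    finally show ?thesis .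
  qed (use i i' \<open>q > 0\<close> in \<open>simp add: F_extension_def\<close>)
qed

lemma F_extension_at_rep:
  assumes "i < n" "per i = m" "class_rep i = i"
  shows "F_extension x i = x i"
proof -
  have "class_exponent i = 0" unfolding class_exponent_def using assms by (intro Least_eq_0) simp
  then show ?thesis unfolding F_extension_def using assms by simp
qed

lemma exists_F_code_hamming_dist_le:
  fixes x :: "nat \<Rightarrow> 'a::{field,finite}"
  assumes card: "card (UNIV :: 'a set) = q ^ m" and "q > 0"
  shows "\<exists>f \<in> F_code q n. hamming_dist n x f \<le> n - B_count q m n"
proof (intro bexI)
  let ?R = "{C \<in> cls ` {..<n}. card C = m}"
  have rep_Min: "Min C = class_rep i" "cls (Min C) = C" if "C = cls i" "i < n" for C i
    using that class_rep_in_class(2)[OF that(2)] unfolding class_rep_def by simp_all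
  have "inj_on Min ?R"
  proof
    fix C C' assume "C \<in> ?R" "C' \<in> ?R" "Min C = Min C'"
    then show "C = C'" using rep_Min(2) by (metis (no_types, lifting) imageE mem_Collect_eq lessThan_iff)
  qed
  then have "card (Min ` ?R) = B_count q m n" unfolding B_count_def by (rule card_image)
  moreover have "Min ` ?R \<subseteq> {i. i < n \<and> x i = F_extension x i}"
  proof
    fix s assume "s \<in> Min ` ?R"
    then obtain i where i: "i < n" "per i = m" and s: "s = class_rep i"
      using rep_Min(1) card_cyclotomic_class by auto
    have "s \<in> cls i" using class_rep_in_class(1)[OF i(1)] s by simp
    then have "s < n" "per s = m" "class_rep s = s"
      using i s cyclotomic_class_less cyclotomic_period_eq_of_mem class_rep_of_mem by auto
    then show "s \<in> {i. i < n \<and> x i = F_extension x i}" using F_extension_at_rep[of s x] by simp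
  qed
  then have "card (Min ` ?R) \<le> card {i. i < n \<and> x i = F_extension x i}"
    by (intro card_mono) auto
  ultimately show "hamming_dist n x (F_extension x) \<le> n - B_count q m n"
    unfolding hamming_dist_eq_diff_agree by simp
  show "F_extension x \<in> F_code q n" by (rule F_extension_in_F_code[OF assms])
qed

end

section \<open>Moebius inversion\<close>

lemma moebius_mu_prime_mult_dvd:
  assumes "prime (p::nat)" "p dvd d"
  shows "moebius_mu (p * d) = 0"
proof -
  have "p ^ 2 dvd p * d" using assms(2) by (simp add: power2_eq_square)
  then have "\<not> squarefree (p * d)"
    using assms(1) not_prime_unit unfolding squarefree_def by blast
  then show ?thesis by (simp add: moebius_mu_def)
qed

lemma moebius_mu_prime_mult:
  assumes p: "prime (p::nat)" and "\<not> p dvd d" "d > 0"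
  shows "moebius_mu (p * d) = - moebius_mu d"
proof -
  have "coprime p d" using prime_imp_coprime[OF p] assms(2) .
  then have "squarefree (p * d) \<longleftrightarrow> squarefree d"
    using squarefree_multD(2)[of p d] squarefree_mult_coprime squarefree_prime[OF p] by blast
  moreover have "prime_factors (p * d) = insert p (prime_factors d)"
    using prime_factors_product[of p d] p assms(3) prime_prime_factors[OF p] by auto
  moreover have "p \<notin> prime_factors d" using assms(2) in_prime_factors_imp_dvd by blast
  ultimately show ?thesis using p assms(3) by (simp add: moebius_mu_def)
qed

lemma divisors_prime_mult:
  assumes p: "prime (p::nat)"
  shows "{d. d dvd p * k} = {d. d dvd k \<and> \<not> p dvd d} \<union> (*) p ` {d. d dvd k}"
proof (intro equalityI subsetI)
  fix d assume "d \<in> {d. d dvd p * k}"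
  then have d: "d dvd p * k" by simp
  show "d \<in> {d. d dvd k \<and> \<not> p dvd d} \<union> (*) p ` {d. d dvd k}"
  proof (cases "p dvd d")
    case True
    then obtain d' where "d = p * d'" by (elim dvdE)
    then show ?thesis using d p by (auto simp: prime_gt_0_nat)
  next
    case False
    then have "coprime d p" using prime_imp_coprime[OF p] by (simp add: coprime_commute)
    then show ?thesis using d False by (simp add: coprime_dvd_mult_right_iff)
  qed
qed (auto simp: mult_dvd_mono)

lemma sum_moebius_mu_divisors:
  assumes "(k::nat) > 0"
  shows "(\<Sum>d | d dvd k. moebius_mu d) = (if k = 1 then 1 else 0)"
proof (cases "k = 1")
  case True
  then show ?thesis by (simp add: moebius_mu_def)
next
  case False
  obtain p where p: "prime p" "p dvd k" using prime_factor_nat[OF False] by auto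
  then obtain k' where k: "k = p * k'" by (elim dvdE)
  have "k' > 0" using assms k by auto
  let ?E = "{d. d dvd k' \<and> \<not> p dvd d}"
  \<comment> \<open>the divisors \<open>p * d\<close> contribute exactly the negatives of the divisors \<open>d\<close> prime to \<open>p\<close>\<close>
  have "(\<Sum>d\<in>(*) p ` {d. d dvd k'}. moebius_mu d) = (\<Sum>d | d dvd k'. moebius_mu (p * d))"
    using p(1) by (subst sum.reindex) (auto simp: inj_on_def prime_gt_0_nat)
  also have "\<dots> = (\<Sum>d | d dvd k'. if \<not> p dvd d then - moebius_mu d else 0)"
    using \<open>k' > 0\<close> moebius_mu_prime_mult_dvd[OF p(1)] moebius_mu_prime_mult[OF p(1)]
    by (intro sum.cong) (auto intro: dvd_pos_nat)
  also have "\<dots> = (\<Sum>d\<in>?E. - moebius_mu d)"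
    using \<open>k' > 0\<close> by (subst sum.inter_filter[symmetric]) simp_all
  finally have "(\<Sum>d\<in>(*) p ` {d. d dvd k'}. moebius_mu d) = - (\<Sum>d\<in>?E. moebius_mu d)"
    by (simp add: sum_negf)
  moreover have "finite ?E" "finite ((*) p ` {d. d dvd k'})" "?E \<inter> (*) p ` {d. d dvd k'} = {}"
    using \<open>k' > 0\<close> by auto
  ultimately have "(\<Sum>d\<in>?E \<union> (*) p ` {d. d dvd k'}. moebius_mu d) = 0"
    by (simp add: sum.union_disjoint)
  then show ?thesis using False by (simp add: k divisors_prime_mult[OF p(1)])
qed

lemma sum_moebius_mu_cofactors:
  assumes "(m::nat) > 0" "e dvd m"
  shows "(\<Sum>r | r dvd m \<and> e dvd r. moebius_mu (m div r)) = (if e = m then 1 else 0)"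
proof -
  obtain c where c: "m = e * c" using assms(2) by (elim dvdE)
  have "e > 0" "c > 0" using c assms(1) by auto
  have "(\<Sum>r | r dvd m \<and> e dvd r. moebius_mu (m div r)) = (\<Sum>u | u dvd c. moebius_mu u)"
  proof (rule sum.reindex_bij_witness[of _ "\<lambda>u. m div u" "\<lambda>r. m div r"])
    fix r assume "r \<in> {r. r dvd m \<and> e dvd r}"
    then obtain b s where "r = e * b" "m = r * s" unfolding dvd_def by auto
    then show "m div (m div r) = r" "m div r \<in> {u. u dvd c}"
      using c \<open>e > 0\<close> assms(1) by auto
  next
    fix u assume "u \<in> {u. u dvd c}"
    then obtain t where "c = u * t" unfolding dvd_def by auto
    then show "m div (m div u) = u" "m div u \<in> {r. r dvd m \<and> e dvd r}"
      using c \<open>e > 0\<close> \<open>c > 0\<close> by auto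
  qed simp
  also have "\<dots> = (if c = 1 then 1 else 0)" by (rule sum_moebius_mu_divisors[OF \<open>c > 0\<close>])
  finally show ?thesis using c \<open>e > 0\<close> by auto
qed

lemma moebius_inversion:
  fixes H G :: "nat \<Rightarrow> 'a::comm_ring_1"
  assumes "m > 0" and sum_H: "\<And>d. d dvd m \<Longrightarrow> (\<Sum>e | e dvd d. H e) = G d"
  shows "H m = (\<Sum>r | r dvd m. of_int (moebius_mu (m div r)) * G r)"
proof -
  let ?D = "{d. d dvd m}" and ?mu = "\<lambda>r. of_int (moebius_mu (m div r)) :: 'a"
  have "finite ?D" using \<open>m > 0\<close> by simp
  have "(\<Sum>r\<in>?D. ?mu r * G r) = (\<Sum>r\<in>?D. \<Sum>e\<in>{e \<in> ?D. e dvd r}. ?mu r * H e)"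
  proof (rule sum.cong[OF refl])
    fix r assume "r \<in> ?D"
    then have "{e \<in> ?D. e dvd r} = {e. e dvd r}" "G r = (\<Sum>e | e dvd r. H e)"
      using sum_H by (auto intro: dvd_trans)
    then show "?mu r * G r = (\<Sum>e\<in>{e \<in> ?D. e dvd r}. ?mu r * H e)"
      by (simp add: sum_distrib_left)
  qed
  also have "\<dots> = (\<Sum>e\<in>?D. \<Sum>r\<in>{r \<in> ?D. e dvd r}. ?mu r * H e)"
    by (rule sum.swap_restrict[OF \<open>finite ?D\<close> \<open>finite ?D\<close>])
  also have "\<dots> = (\<Sum>e\<in>?D. if e = m then H e else 0)"
  proof (rule sum.cong[OF refl])
    fix e assume "e \<in> ?D"
    then have "(\<Sum>r\<in>{r \<in> ?D. e dvd r}. ?mu r) = (if e = m then 1 else 0)"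
      using sum_moebius_mu_cofactors[OF \<open>m > 0\<close>, of e] by (simp flip: of_int_sum)
    then show "(\<Sum>r\<in>{r \<in> ?D. e dvd r}. ?mu r * H e) = (if e = m then H e else 0)"
      by (simp add: sum_distrib_right[symmetric])
  qed
  also have "\<dots> = H m" using \<open>finite ?D\<close> by simp
  finally show ?thesis by simp
qed

theorem theorem10p3:
  fixes q m n :: nat
  assumes q_pp: "\<exists>p k. prime p \<and> k > 0 \<and> q = p ^ k"
    and m_pos: "m > 0"
    and card_L: "card (UNIV :: 'a::{field,finite} set) = q ^ m"
    and n_dvd: "n dvd q ^ m - 1"
  shows "covering_radius n (F_code q n :: (nat \<Rightarrow> 'a) set) = n - B_count q m n
         \<and> (n = q ^ m - 1 \<longrightarrow>
              real (B_count q m n) =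
                (1 / real m) * (\<Sum>r | r dvd m. real_of_int (moebius_mu (m div r)) * (real q ^ r - 1)))"
proof
  have "q \<ge> 2" using q_pp by (metis order.trans prime_ge_2_nat self_le_power one_le_numeral)
  then have "q ^ m \<ge> 2" using m_pos self_le_power[of q m] by simp
  then have "n > 0" using n_dvd by (auto intro: Nat.gr0I)
  moreover have "q ^ m mod n = 1 mod n" using n_dvd \<open>q ^ m \<ge> 2\<close> by (subst mod_eq_dvd_iff_nat) auto
  ultimately interpret cyclotomic_orbits q m n using m_pos by unfold_locales
  obtain z :: 'a where z: "\<forall>e. 0 < e \<and> e < m \<longrightarrow> z ^ (q ^ e) \<noteq> z"
    using exists_not_in_proper_subfield[OF card_L \<open>q \<ge> 2\<close>] by blast
  show "covering_radius n (F_code q n :: (nat \<Rightarrow> 'a) set) = n - B_count q m n"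
    using exists_F_code_hamming_dist_le[OF card_L] hamming_dist_const_F_code_ge[OF card_L z] \<open>q \<ge> 2\<close>
    by (intro covering_radius_eqI) (auto simp: F_code_def)
  show "n = q ^ m - 1 \<longrightarrow> real (B_count q m n) =
          (1 / real m) * (\<Sum>r | r dvd m. real_of_int (moebius_mu (m div r)) * (real q ^ r - 1))"
  proof
    assume "n = q ^ m - 1"
    have "real (card {i. i < n \<and> cyclotomic_period q n i = m})
        = (\<Sum>r | r dvd m. real_of_int (moebius_mu (m div r)) * (real q ^ r - 1))"
      using sum_card_period_divisors[OF \<open>n = q ^ m - 1\<close>] \<open>q \<ge> 2\<close>
      by (intro moebius_inversion m_pos) (simp flip: of_nat_sum add: of_nat_diff)
    then show "real (B_count q m n) =
          (1 / real m) * (\<Sum>r | r dvd m. real_of_int (moebius_mu (m div r)) * (real q ^ r - 1))"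
      using m_pos by (simp add: card_full_period_positions field_simps)
  qed
qed

end
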